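(* Let $n\ge 2$, let $M$ be an $n$-Metric on a set $X$, and let $\mathcal{T}$ be the topology on $X$ generated by the $M$-open balls $B^M_\epsilon(x)=\{y\in X\mid M(\langle x\rangle^{n-1},y)<\epsilon\}$ ($x\in X$, $\epsilon>0$). Then $(X,\mathcal{T})$ is a metric space, i.e. there is a metric on $X$ whose open balls generate $\mathcal{T}$.
   Context: Notation: $\langle a\rangle^k$ denotes the $k$-tuple $(a,\dots,a)$ inserted into an argument list. An $n$-Metric on $X$ is a function $M:X^n\to\mathbb{R}$ such that for all $x_1,\dots,x_n,a\in X$: (1) $0\le M(\langle x_1\rangle^{n-1},x_2)$; (2) $M(x_1,\dots,x_n)=M(x_{\pi(1)},\dots,x_{\pi(n)})$ for every permutation $\pi$ of $\{1,\dots,n\}$; (3) $M(\langle x_1\rangle^{n-1},x_2)=0$ if and only if $x_1=x_2$; (4) $M(x_1,\dots,x_n)\le M(x_1,\dots,x_{n-1},a)+M(\langle a\rangle^{n-1},x_n)$. The $M$-open balls form a basis of a topology on $X$. *)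

theory Defs
  imports "HOL-Analysis.Analysis" "HOL-Combinatorics.Permutations"
begin

text \<open>An n-tuple of elements of X is represented as a list of length n with
entries in X; \<open>M\<close> is only constrained on such lists.
\<open>replicate (n-1) x @ [y]\<close> is the tuple (x,...,x,y).\<close>

definition nMetric :: "nat \<Rightarrow> 'a set \<Rightarrow> ('a list \<Rightarrow> real) \<Rightarrow> bool" where
  "nMetric n X M \<longleftrightarrow>
     (\<forall>x1\<in>X. \<forall>x2\<in>X. 0 \<le> M (replicate (n-1) x1 @ [x2])) \<and>
     (\<forall>xs. set xs \<subseteq> X \<and> length xs = n \<longrightarrow>
        (\<forall>\<pi>. \<pi> permutes {0..<n} \<longrightarrow> M xs = M (map (\<lambda>i. xs ! (\<pi> i)) [0..<n]))) \<and>
     (\<forall>x1\<in>X. \<forall>x2\<in>X. M (replicate (n-1) x1 @ [x2]) = 0 \<longleftrightarrow> x1 = x2) \<and>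
     (\<forall>xs a. set xs \<subseteq> X \<and> length xs = n \<and> a \<in> X \<longrightarrow>
        M xs \<le> M (butlast xs @ [a]) + M (replicate (n-1) a @ [last xs]))"

definition nball :: "nat \<Rightarrow> 'a set \<Rightarrow> ('a list \<Rightarrow> real) \<Rightarrow> 'a \<Rightarrow> real \<Rightarrow> 'a set" where
  "nball n X M x \<epsilon> = {y \<in> X. M (replicate (n-1) x @ [y]) < \<epsilon>}"

definition nMetric_topology :: "nat \<Rightarrow> 'a set \<Rightarrow> ('a list \<Rightarrow> real) \<Rightarrow> 'a topology" where
  "nMetric_topology n X M = topology_generated_by {nball n X M x \<epsilon> | x \<epsilon>. x \<in> X \<and> \<epsilon> > 0}"

end

theory Submission
  imports Defs
begin

text \<open>The map \<open>D x y = M(\<langle>x\<rangle>\<^sup>n\<^sup>-\<^sup>1, y)\<close> is a quasi-metric: axioms (1), (3), (4) make it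
nonnegative, definite and subject to the triangle inequality, but it need not be symmetric.
Permutation invariance lets one trade the copies of \<open>x\<close> for copies of \<open>y\<close> one at a time, each
step costing at most \<open>D x y\<close> by the triangle inequality, so that \<open>D y x \<le> (n - 1) D x y\<close>.
Hence \<open>max (D x y) (D y x)\<close> is a metric whose balls and the \<open>M\<close>-balls are nested in each other
up to the factor \<open>n - 1\<close> in the radius, and both generate the same topology.\<close>

locale quasi_metric_space =
  fixes X :: "'a set" and D :: "'a \<Rightarrow> 'a \<Rightarrow> real"
  assumes nonneg: "\<And>x y. \<lbrakk>x \<in> X; y \<in> X\<rbrakk> \<Longrightarrow> 0 \<le> D x y"
    and zero_iff: "\<And>x y. \<lbrakk>x \<in> X; y \<in> X\<rbrakk> \<Longrightarrow> D x y = 0 \<longleftrightarrow> x = y"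
    and triangle: "\<And>x y z. \<lbrakk>x \<in> X; y \<in> X; z \<in> X\<rbrakk> \<Longrightarrow> D x z \<le> D x y + D y z"
begin

definition symdist :: "'a \<Rightarrow> 'a \<Rightarrow> real" where
  "symdist x y = (if x \<in> X \<and> y \<in> X then max (D x y) (D y x) else 0)"

definition qball :: "'a \<Rightarrow> real \<Rightarrow> 'a set" where
  "qball x e = {y \<in> X. D x y < e}"

lemma Metric_space_symdist: "Metric_space X symdist"
proof
  fix x y z
  show "0 \<le> symdist x y" "symdist x y = symdist y x"
    using nonneg by (auto simp: symdist_def le_max_iff_disj)
  show "\<lbrakk>x \<in> X; y \<in> X\<rbrakk> \<Longrightarrow> symdist x y = 0 \<longleftrightarrow> x = y"
    using zero_iff nonneg by (auto simp: symdist_def max_def)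
  assume xyz: "x \<in> X" "y \<in> X" "z \<in> X"
  then have "D x z \<le> D x y + D y z" "D z x \<le> D z y + D y x"
    by (auto intro: triangle)
  then show "symdist x z \<le> symdist x y + symdist y z"
    using xyz by (auto simp: symdist_def)
qed

sublocale sym: Metric_space X symdist
  by (rule Metric_space_symdist)

lemma centre_in_qball: "\<lbrakk>x \<in> X; 0 < e\<rbrakk> \<Longrightarrow> x \<in> qball x e"
  using zero_iff[of x x] by (simp add: qball_def)

lemma openin_qball:
  assumes x: "x \<in> X"
  shows "openin sym.mtopology (qball x e)"
  unfolding sym.openin_mtopology
proof (intro conjI allI impI)
  show "qball x e \<subseteq> X"
    by (auto simp: qball_def)
next
  fix y assume "y \<in> qball x e"
  then have y: "y \<in> X" "D x y < e"
    by (auto simp: qball_def)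
  have "sym.mball y (e - D x y) \<subseteq> qball x e"
  proof
    fix z assume "z \<in> sym.mball y (e - D x y)"
    then have z: "z \<in> X" and "D y z < e - D x y"
      using y by (auto simp: symdist_def)
    then have "D x z < e"
      using triangle[OF x y(1) z] by simp
    then show "z \<in> qball x e"
      using z by (simp add: qball_def)
  qed
  then show "\<exists>r>0. sym.mball y r \<subseteq> qball x e"
    using y(2) by (intro exI[of _ "e - D x y"]) auto
qed

lemma qball_subset_mball:
  assumes "1 \<le> C" and swap_le: "\<And>x y. \<lbrakk>x \<in> X; y \<in> X\<rbrakk> \<Longrightarrow> D y x \<le> C * D x y"
    and "x \<in> X"
  shows "qball x (e / C) \<subseteq> sym.mball x e"
proof
  fix y assume "y \<in> qball x (e / C)"
  then have y: "y \<in> X" and Dxy: "D x y < e / C"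
    by (auto simp: qball_def)
  have "0 < e / C"
    using Dxy nonneg[OF \<open>x \<in> X\<close> y] by linarith
  then have "e / C \<le> e"
    using \<open>1 \<le> C\<close> by (simp add: divide_le_eq zero_less_divide_iff)
  then have "D x y < e"
    using Dxy by linarith
  moreover have "D y x < e"
  proof -
    have "D y x \<le> C * D x y"
      using swap_le \<open>x \<in> X\<close> y .
    also have "\<dots> < C * (e / C)"
      using Dxy \<open>1 \<le> C\<close> by (intro mult_strict_left_mono) auto
    finally show ?thesis
      using \<open>1 \<le> C\<close> by simp
  qed
  ultimately show "y \<in> sym.mball x e"
    using \<open>x \<in> X\<close> y by (simp add: symdist_def)
qed

theorem mtopology_symdist_eq:
  assumes "1 \<le> C" and swap_le: "\<And>x y. \<lbrakk>x \<in> X; y \<in> X\<rbrakk> \<Longrightarrow> D y x \<le> C * D x y"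
  shows "sym.mtopology = topology_generated_by {qball x e | x e. x \<in> X \<and> 0 < e}"
    (is "_ = topology_generated_by ?B")
proof (rule topology_eq[THEN iffD2], intro allI iffI)
  fix U assume "openin sym.mtopology U"
  then have UX: "U \<subseteq> X" and "\<forall>x\<in>U. \<exists>r>0. sym.mball x r \<subseteq> U"
    by (auto simp: sym.openin_mtopology)
  then obtain r where r: "\<And>x. x \<in> U \<Longrightarrow> 0 < r x" "\<And>x. x \<in> U \<Longrightarrow> sym.mball x (r x) \<subseteq> U"
    by metis
  have pos: "0 < r x / C" if "x \<in> U" for x
    using r(1)[OF that] \<open>1 \<le> C\<close> by simp
  have U_eq: "U = (\<Union>x\<in>U. qball x (r x / C))"
  proof (intro equalityI subsetI)
    fix x assume x: "x \<in> U"
    have "x \<in> qball x (r x / C)"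
      using x UX pos by (intro centre_in_qball) auto
    with x show "x \<in> (\<Union>x\<in>U. qball x (r x / C))"
      by (rule UN_I)
  next
    fix y assume "y \<in> (\<Union>x\<in>U. qball x (r x / C))"
    then obtain x where x: "x \<in> U" and y: "y \<in> qball x (r x / C)"
      by blast
    have "qball x (r x / C) \<subseteq> sym.mball x (r x)"
      using x UX by (intro qball_subset_mball[OF assms]) auto
    with y r(2)[OF x] show "y \<in> U"
      by auto
  qed
  have "qball x (r x / C) \<in> ?B" if "x \<in> U" for x
    using UX that pos[OF that] by blast
  then have "openin (topology_generated_by ?B) (\<Union>x\<in>U. qball x (r x / C))"
    by (intro openin_Union) (auto intro: topology_generated_by_Basis)
  with U_eq show "openin (topology_generated_by ?B) U"
    by simp
next
  fix U assume "openin (topology_generated_by ?B) U"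
  then have "generate_topology_on ?B U"
    by (rule openin_topology_generated_by)
  then show "openin sym.mtopology U"
    by (rule generate_topology_on_coarsest[OF istopology_openin, rotated]) (auto simp: openin_qball)
qed

end

definition nMetric_dist :: "nat \<Rightarrow> ('a list \<Rightarrow> real) \<Rightarrow> 'a \<Rightarrow> 'a \<Rightarrow> real" where
  "nMetric_dist n M x y = M (replicate (n - 1) x @ [y])"

lemma nMetric_permute_eq:
  assumes "nMetric n X M" "set xs \<subseteq> X" "length xs = n" "mset xs = mset ys"
  shows "M ys = M xs"
proof -
  obtain p where p: "p permutes {..<length xs}" "permute_list p xs = ys"
    using mset_eq_permutation[of ys xs] assms(4) by metis
  have "p permutes {0..<n}"
    using p(1) assms(3) by (simp add: atLeast0LessThan)
  then have "M xs = M (map (\<lambda>i. xs ! p i) [0..<n])"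
    using assms(1-3) unfolding nMetric_def by blast
  also have "\<dots> = M ys"
    using p(2) assms(3) by (simp add: permute_list_def)
  finally show ?thesis by simp
qed

lemma nMetric_triangle_butlast:
  assumes "nMetric n X M" "set xs \<subseteq> X" "length xs = n" "a \<in> X"
  shows "M xs \<le> M (butlast xs @ [a]) + nMetric_dist n M a (last xs)"
  using assms unfolding nMetric_def nMetric_dist_def by blast

lemma nMetric_quasi_metric_space:
  assumes "nMetric n X M" "1 \<le> n"
  shows "quasi_metric_space X (nMetric_dist n M)"
proof
  fix x y z assume xyz: "x \<in> X" "y \<in> X" "z \<in> X"
  show "0 \<le> nMetric_dist n M x y" "nMetric_dist n M x y = 0 \<longleftrightarrow> x = y"
    using assms(1) xyz unfolding nMetric_def nMetric_dist_def by blast+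
  have "set (replicate (n - 1) x @ [z]) \<subseteq> X" "length (replicate (n - 1) x @ [z]) = n"
    using xyz assms(2) by auto
  from nMetric_triangle_butlast[OF assms(1) this \<open>y \<in> X\<close>]
  show "nMetric_dist n M x z \<le> nMetric_dist n M x y + nMetric_dist n M y z"
    by (simp add: nMetric_dist_def)
qed

text \<open>Replacing the copies of \<open>x\<close> by \<open>y\<close> one at a time: the triangle axiom with \<open>a = x\<close> pulls
a copy of \<open>x\<close> back in front of the last \<open>y\<close> at cost \<open>D x y\<close>.\<close>

lemma nMetric_replicate_le:
  assumes "nMetric n X M" "x \<in> X" "y \<in> X" "1 \<le> k" "k < n"
  shows "M (replicate (n - k) x @ replicate k y) \<le> real k * nMetric_dist n M x y"
  using \<open>1 \<le> k\<close> \<open>k < n\<close>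
proof (induction k rule: nat_induct_at_least)
  case base
  then show ?case by (simp add: nMetric_dist_def)
next
  case (Suc k)
  let ?ys = "replicate (n - Suc k) x @ replicate k y"
  have xs: "set (?ys @ [y]) \<subseteq> X" "length (?ys @ [y]) = n"
    using assms(2,3) Suc.prems by auto
  have "n - k = Suc (n - Suc k)"
    using Suc.prems by simp
  then have "mset (replicate (n - k) x @ replicate k y) = mset (?ys @ [x])"
    by simp
  moreover have "set (replicate (n - k) x @ replicate k y) \<subseteq> X"
    "length (replicate (n - k) x @ replicate k y) = n"
    using assms(2,3) Suc.prems by auto
  ultimately have "M (?ys @ [x]) = M (replicate (n - k) x @ replicate k y)"
    using nMetric_permute_eq[OF assms(1)] by blast
  then have "M (?ys @ [y]) \<le> M (replicate (n - k) x @ replicate k y) + nMetric_dist n M x y"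
    using nMetric_triangle_butlast[OF assms(1) xs assms(2)] unfolding butlast_snoc last_snoc
    by simp
  also have "\<dots> \<le> real (Suc k) * nMetric_dist n M x y"
    using Suc by (simp add: algebra_simps)
  finally show ?case
    by (simp add: replicate_append_same)
qed

lemma nMetric_dist_swap_le:
  assumes "nMetric n X M" "2 \<le> n" "x \<in> X" "y \<in> X"
  shows "nMetric_dist n M y x \<le> real (n - 1) * nMetric_dist n M x y"
proof -
  have "set ([x] @ replicate (n - 1) y) \<subseteq> X" "length ([x] @ replicate (n - 1) y) = n"
    "mset ([x] @ replicate (n - 1) y) = mset (replicate (n - 1) y @ [x])"
    using assms by auto
  then have "nMetric_dist n M y x = M ([x] @ replicate (n - 1) y)"
    unfolding nMetric_dist_def by (rule nMetric_permute_eq[OF assms(1)])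
  also have "\<dots> = M (replicate (n - (n - 1)) x @ replicate (n - 1) y)"
    using assms(2) by (simp add: numeral_2_eq_2)
  also have "\<dots> \<le> real (n - 1) * nMetric_dist n M x y"
    using nMetric_replicate_le[OF assms(1,3,4), of "n - 1"] assms(2) by linarith
  finally show ?thesis .
qed

theorem theorem3p14:
  fixes X :: "'a set" and M :: "'a list \<Rightarrow> real" and n :: nat
  assumes "n \<ge> 2" and "nMetric n X M"
  shows "\<exists>d. Metric_space X d \<and> Metric_space.mtopology X d = nMetric_topology n X M"
proof -
  interpret quasi_metric_space X "nMetric_dist n M"
    using nMetric_quasi_metric_space[OF assms(2)] assms(1) by simp
  have swap_le: "\<And>x y. \<lbrakk>x \<in> X; y \<in> X\<rbrakk> \<Longrightarrow>
      nMetric_dist n M y x \<le> real (n - 1) * nMetric_dist n M x y"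
    using nMetric_dist_swap_le[OF assms(2,1)] .
  have "nball n X M = qball"
    by (simp add: fun_eq_iff nball_def qball_def nMetric_dist_def)
  moreover have "sym.mtopology = topology_generated_by {qball x e | x e. x \<in> X \<and> 0 < e}"
    using assms(1) by (intro mtopology_symdist_eq[OF _ swap_le]) simp
  ultimately have "sym.mtopology = nMetric_topology n X M"
    by (simp add: nMetric_topology_def)
  with Metric_space_symdist show ?thesis
    by blast
qed

end
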